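(* Let $n,k,\delta$ be positive integers with $k<n$ and $(n-k)\mid\delta$, and set $M=\max\{n-k,k\}$ and $L=\lfloor \delta/k\rfloor+\delta/(n-k)$. Let $\mathbb{F}$ be a finite field of characteristic $p$ and let $\alpha$ be a primitive element of $\mathbb{F}$. For $\ell=0,1,\dots,L$ let $T_\ell\in\mathbb{F}^{M\times M}$ be the matrix whose $(i,j)$ entry ($1\le i,j\le M$) is $$(T_\ell)_{ij}=\alpha^{2^{M\ell+(i-1)+(j-1)}},$$ and let $\mathcal{T}(T_0,\dots,T_L)\in\mathbb{F}^{(L+1)M\times(L+1)M}$ be the lower block triangular block Toeplitz matrix $$\mathcal{T}(T_0,\dots,T_L)=\begin{pmatrix} T_0 & 0 & \cdots & 0\\ T_1 & T_0 & \cdots & 0\\ \vdots & \vdots & \ddots & \vdots\\ T_L & T_{L-1} & \cdots & T_0\end{pmatrix}.$$ If $|\mathbb{F}|\ge p^{\left(2^{M(L+2)-1}\right)}$, then $\mathcal{T}(T_0,\dots,T_L)$ is superregular over $\mathbb{F}$.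
   Context: For a square matrix $A=[\mu_{ij}]$ of order $m$, $|A|=\sum_{\sigma\in S_m}(-1)^{\mathrm{sgn}(\sigma)}\mu_{1\sigma(1)}\cdots\mu_{m\sigma(m)}$; a term $\mu_{1\sigma(1)}\cdots\mu_{m\sigma(m)}$ is called trivial if $\mu_{i\sigma(i)}=0$ for some $i$. If $A$ is a square submatrix of a matrix $B$ and all terms of the determinant of $A$ are trivial, then $|A|$ is called a trivial minor of $B$. A matrix $B$ is called superregular if all its non-trivial minors are nonzero. *)

theory Defs
  imports "Jordan_Normal_Form.Determinant" "Jordan_Normal_Form.DL_Submatrix"
begin

definition trivial_minor :: "'a::comm_ring_1 mat \<Rightarrow> bool" where
  "trivial_minor S \<longleftrightarrow>
     (\<forall>\<sigma>. \<sigma> permutes {0..<dim_row S} \<longrightarrow> (\<exists>i<dim_row S. S $$ (i, \<sigma> i) = 0))"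

definition superregular :: "'a::comm_ring_1 mat \<Rightarrow> bool" where
  "superregular B \<longleftrightarrow>
     (\<forall>I J. I \<subseteq> {0..<dim_row B} \<longrightarrow> J \<subseteq> {0..<dim_col B} \<longrightarrow> card I = card J \<longrightarrow>
        \<not> trivial_minor (submatrix B I J) \<longrightarrow> det (submatrix B I J) \<noteq> 0)"

definition primitive_element :: "'a::field \<Rightarrow> bool" where
  "primitive_element \<alpha> \<longleftrightarrow> (\<forall>x. x \<noteq> 0 \<longrightarrow> (\<exists>e::nat. x = \<alpha> ^ e))"

definition T_block :: "'a::field \<Rightarrow> nat \<Rightarrow> nat \<Rightarrow> 'a mat" where
  "T_block \<alpha> M l = mat M M (\<lambda>(i,j). \<alpha> ^ (2 ^ (M * l + i + j)))"

definition block_toeplitz :: "(nat \<Rightarrow> 'a::zero mat) \<Rightarrow> nat \<Rightarrow> nat \<Rightarrow> 'a mat" where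
  "block_toeplitz T M L = mat ((L+1)*M) ((L+1)*M)
     (\<lambda>(r,c). if c div M \<le> r div M then T (r div M - c div M) $$ (r mod M, c mod M) else 0)"

end

theory Submission
  imports Defs
begin

text \<open>Write the row and column indices of the block Toeplitz matrix globally as \<open>r\<close> and \<open>c\<close>. Its
  nonzero entries are \<open>\<alpha> ^ 2 ^ (r + y c)\<close>, where \<open>y\<close> is injective on columns, and an entry vanishes
  exactly when \<open>y c\<close> lies below a threshold depending on the row. Hence every minor expands as a
  signed sum of powers \<open>\<alpha> ^ (\<Sum>i. 2 ^ (r i + y (c (\<sigma> i))))\<close> over the permutations \<open>\<sigma>\<close> avoiding the
  zeros. An exchange argument shows that exactly one such \<open>\<sigma>\<close> maximises the exponent \<open>E\<close>, because
  \<open>2 ^ (a + h) + 2 ^ (a + d) < 2 ^ a + 2 ^ (a + d + h)\<close> for \<open>d, h > 0\<close>. If the minor vanished,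
  \<open>\<alpha> ^ E\<close> would be an integer combination of lower powers of \<open>\<alpha>\<close>; as \<open>\<alpha>\<close> is primitive, the whole
  field would be spanned over the prime field by \<open>1, \<alpha>, \<dots>, \<alpha> ^ (E - 1)\<close>, so it would have at most
  \<open>p ^ E\<close> elements. But \<open>E < 2 ^ (M (L + 2) - 1)\<close>, contradicting the size assumption.\<close>

section \<open>Integer combinations of powers in a finite field\<close>

definition int_span_powers :: "'a::comm_ring_1 \<Rightarrow> nat \<Rightarrow> 'a set" where
  "int_span_powers \<alpha> N = {x. \<exists>c::nat \<Rightarrow> int. x = (\<Sum>i<N. of_int (c i) * \<alpha> ^ i)}"

lemma int_span_powersI: "x = (\<Sum>i<N. of_int (c i) * \<alpha> ^ i) \<Longrightarrow> x \<in> int_span_powers \<alpha> N"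
  unfolding int_span_powers_def by blast

lemma int_span_powers_zero: "0 \<in> int_span_powers \<alpha> N"
  unfolding int_span_powers_def by (rule CollectI, rule exI[of _ "\<lambda>_. 0"]) simp

lemma int_span_powers_add:
  assumes "x \<in> int_span_powers \<alpha> N" "z \<in> int_span_powers \<alpha> N"
  shows "x + z \<in> int_span_powers \<alpha> N"
proof -
  obtain c d where "x = (\<Sum>i<N. of_int (c i) * \<alpha> ^ i)" "z = (\<Sum>i<N. of_int (d i) * \<alpha> ^ i)"
    using assms unfolding int_span_powers_def by blast
  then have "x + z = (\<Sum>i<N. of_int (c i + d i) * \<alpha> ^ i)"
    by (simp add: sum.distrib distrib_right)
  then show ?thesis by (rule int_span_powersI)
qed

lemma int_span_powers_of_int_mult:
  assumes "x \<in> int_span_powers \<alpha> N"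
  shows "of_int k * x \<in> int_span_powers \<alpha> N"
proof -
  obtain c where "x = (\<Sum>i<N. of_int (c i) * \<alpha> ^ i)"
    using assms unfolding int_span_powers_def by blast
  then have "of_int k * x = (\<Sum>i<N. of_int (k * c i) * \<alpha> ^ i)"
    by (simp add: sum_distrib_left mult.assoc)
  then show ?thesis by (rule int_span_powersI)
qed

lemma int_span_powers_sum:
  "finite A \<Longrightarrow> (\<And>a. a \<in> A \<Longrightarrow> f a \<in> int_span_powers \<alpha> N) \<Longrightarrow> sum f A \<in> int_span_powers \<alpha> N"
  by (induction A rule: finite_induct) (auto intro: int_span_powers_zero int_span_powers_add)

lemma power_in_int_span_powers:
  assumes "i < N"
  shows "\<alpha> ^ i \<in> int_span_powers \<alpha> N"
proof -
  have "\<alpha> ^ i = (\<Sum>j<N. of_int (of_bool (j = i)) * \<alpha> ^ j)"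
    using assms by simp
  then show ?thesis by (rule int_span_powersI)
qed

lemma all_powers_in_int_span_powers:
  assumes top: "\<alpha> ^ N \<in> int_span_powers \<alpha> N"
  shows "\<alpha> ^ e \<in> int_span_powers \<alpha> N"
proof (induction e rule: less_induct)
  case (less e)
  show ?case
  proof (cases "e \<le> N")
    case True
    then show ?thesis using top power_in_int_span_powers[of e N] by (cases "e = N") auto
  next
    case False
    obtain c where c: "\<alpha> ^ N = (\<Sum>i<N. of_int (c i) * \<alpha> ^ i)"
      using top unfolding int_span_powers_def by blast
    have "\<alpha> ^ e = \<alpha> ^ (e - N) * \<alpha> ^ N"
      using False by (simp flip: power_add)
    also have "\<dots> = (\<Sum>i<N. of_int (c i) * \<alpha> ^ (e - N + i))"
      unfolding c by (simp add: sum_distrib_left power_add mult.left_commute)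
    also have "\<dots> \<in> int_span_powers \<alpha> N"
      using False by (intro int_span_powers_sum int_span_powers_of_int_mult less) auto
    finally show ?thesis .
  qed
qed

lemma of_int_eq_of_nat_mod_CHAR:
  assumes "0 < CHAR('a::comm_ring_1)"
  shows "(of_int k :: 'a) = of_nat (nat (k mod int CHAR('a)))"
proof -
  have "(of_int (k - k mod int CHAR('a)) :: 'a) = 0"
    by (simp only: of_int_eq_0_iff_char_dvd) (simp add: minus_mod_eq_mult_div)
  then show ?thesis using assms by simp
qed

lemma card_int_span_powers_le:
  fixes \<alpha> :: "'a::{finite,comm_ring_1}"
  shows "card (int_span_powers \<alpha> N) \<le> CHAR('a) ^ N"
proof -
  define p where "p = CHAR('a)"
  have p: "0 < p" unfolding p_def by (rule finite_imp_CHAR_pos) simp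
  define F where "F = {..<N} \<rightarrow>\<^sub>E {..<p}"
  have "int_span_powers \<alpha> N \<subseteq> (\<lambda>f. \<Sum>i<N. of_nat (f i) * \<alpha> ^ i) ` F"
  proof
    fix x assume "x \<in> int_span_powers \<alpha> N"
    then obtain c where c: "x = (\<Sum>i<N. of_int (c i) * \<alpha> ^ i)"
      unfolding int_span_powers_def by blast
    define f where "f = restrict (\<lambda>i. nat (c i mod int p)) {..<N}"
    have "f \<in> F"
      using p unfolding f_def F_def by (auto simp: nat_less_iff)
    moreover have "x = (\<Sum>i<N. of_nat (f i) * \<alpha> ^ i)"
      unfolding c f_def p_def by (intro sum.cong) (auto simp: of_int_eq_of_nat_mod_CHAR[OF p[unfolded p_def]])
    ultimately show "x \<in> (\<lambda>f. \<Sum>i<N. of_nat (f i) * \<alpha> ^ i) ` F" by blast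
  qed
  moreover have "finite F"
    unfolding F_def by (simp add: finite_PiE)
  ultimately have "card (int_span_powers \<alpha> N) \<le> card ((\<lambda>f. \<Sum>i<N. of_nat (f i) * \<alpha> ^ i) ` F)"
    by (intro card_mono) auto
  also have "\<dots> \<le> card F"
    using \<open>finite F\<close> by (rule card_image_le)
  also have "card F = p ^ N"
    unfolding F_def by (simp add: card_PiE)
  finally show ?thesis unfolding p_def .
qed

lemma card_le_of_power_in_int_span_powers:
  fixes \<alpha> :: "'a::{finite,field}"
  assumes "primitive_element \<alpha>" and "\<alpha> ^ N \<in> int_span_powers \<alpha> N"
  shows "card (UNIV :: 'a set) \<le> CHAR('a) ^ N"
proof -
  have "x \<in> int_span_powers \<alpha> N" for x
  proof (cases "x = 0")
    case True
    then show ?thesis by (simp add: int_span_powers_zero)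
  next
    case False
    then obtain e where "x = \<alpha> ^ e"
      using assms(1) unfolding primitive_element_def by blast
    then show ?thesis using all_powers_in_int_span_powers[OF assms(2)] by simp
  qed
  then have "UNIV = int_span_powers \<alpha> N" by blast
  then show ?thesis using card_int_span_powers_le by metis
qed

lemma power_in_int_span_powers_if_sum_eq_0:
  fixes \<alpha> :: "'a::comm_ring_1"
  assumes "finite V" "\<sigma> \<in> V" "\<bar>c \<sigma>\<bar> = 1" "\<And>p. p \<in> V - {\<sigma>} \<Longrightarrow> E p < E \<sigma>"
    and "(\<Sum>p\<in>V. of_int (c p) * \<alpha> ^ E p) = 0"
  shows "\<alpha> ^ E \<sigma> \<in> int_span_powers \<alpha> (E \<sigma>)"
proof -
  have "c \<sigma> * c \<sigma> = 1"
    using assms(3) abs_mult_self_eq[of "c \<sigma>"] by simp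
  then have "\<alpha> ^ E \<sigma> = of_int (c \<sigma>) * (of_int (c \<sigma>) * \<alpha> ^ E \<sigma>)"
    by (simp flip: mult.assoc of_int_mult)
  also have "of_int (c \<sigma>) * \<alpha> ^ E \<sigma> = - (\<Sum>p\<in>V - {\<sigma>}. of_int (c p) * \<alpha> ^ E p)"
    using assms(5) sum.remove[OF assms(1,2), of "\<lambda>p. of_int (c p) * \<alpha> ^ E p"]
    by (simp add: eq_neg_iff_add_eq_0)
  also have "of_int (c \<sigma>) * - (\<Sum>p\<in>V - {\<sigma>}. of_int (c p) * \<alpha> ^ E p) =
      of_int (- c \<sigma>) * (\<Sum>p\<in>V - {\<sigma>}. of_int (c p) * \<alpha> ^ E p)"
    by simp
  also have "\<dots> \<in> int_span_powers \<alpha> (E \<sigma>)"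
    using assms(1,4)
    by (intro int_span_powers_of_int_mult int_span_powers_sum power_in_int_span_powers) auto
  finally show ?thesis .
qed

section \<open>Permutations of maximal weight\<close>

text \<open>For a matrix whose entry \<open>(i, j)\<close> vanishes exactly when \<open>y j < t i\<close>, the admissible
  permutations are those with a nonzero Leibniz term. An inversion \<open>i < i'\<close>, \<open>y (\<sigma> i') < y (\<sigma> i)\<close>
  is forced if the column \<open>\<sigma> i'\<close> is not admissible in row \<open>i\<close>, so that it cannot be undone by a
  transposition.\<close>

definition admissible_perms :: "nat \<Rightarrow> (nat \<Rightarrow> 'b::linorder) \<Rightarrow> (nat \<Rightarrow> 'b) \<Rightarrow> (nat \<Rightarrow> nat) set" where
  "admissible_perms m t y = {\<sigma>. \<sigma> permutes {..<m} \<and> (\<forall>i<m. t i \<le> y (\<sigma> i))}"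

definition only_forced_inversions :: "nat \<Rightarrow> (nat \<Rightarrow> 'b::linorder) \<Rightarrow> (nat \<Rightarrow> 'b) \<Rightarrow> (nat \<Rightarrow> nat) \<Rightarrow> bool" where
  "only_forced_inversions m t y \<sigma> \<longleftrightarrow>
     (\<forall>i i'. i < i' \<longrightarrow> i' < m \<longrightarrow> y (\<sigma> i') < y (\<sigma> i) \<longrightarrow> y (\<sigma> i') < t i)"

lemma finite_admissible_perms: "finite (admissible_perms m t y)"
  unfolding admissible_perms_def by (rule finite_subset[OF _ finite_permutations[of "{..<m}"]]) auto

lemma permutes_disagreement_subset:
  assumes "\<sigma> permutes A" "\<tau> permutes A"
  shows "{x. \<sigma> x \<noteq> \<tau> x} \<subseteq> A"
proof
  fix x assume x: "x \<in> {x. \<sigma> x \<noteq> \<tau> x}"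
  show "x \<in> A"
  proof (rule ccontr)
    assume "x \<notin> A"
    then have "\<sigma> x = \<tau> x"
      using assms by (simp add: permutes_not_in)
    then show False using x by simp
  qed
qed

lemma permutes_image_disagreement:
  assumes "\<sigma> permutes A" "\<tau> permutes A"
  shows "\<sigma> ` {x. \<sigma> x \<noteq> \<tau> x} = \<tau> ` {x. \<sigma> x \<noteq> \<tau> x}"
proof -
  define D where "D = {x. \<sigma> x \<noteq> \<tau> x}"
  have "\<sigma> ` (- D) = \<tau> ` (- D)"
    unfolding D_def by (rule image_cong) auto
  moreover have "\<sigma> ` (- D) = - \<sigma> ` D" "\<tau> ` (- D) = - \<tau> ` D"
    using assms by (simp_all add: bij_image_Compl_eq permutes_bij)
  ultimately show ?thesis
    unfolding D_def[symmetric] by simp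
qed

text \<open>Uniqueness: at a position of disagreement whose column has least \<open>y\<close>-value, that column
  occurs in the other permutation at a different position, which produces an unforced inversion in
  one of the two.\<close>

lemma only_forced_inversions_disagreement:
  assumes \<sigma>: "\<sigma> \<in> admissible_perms m t y"
    and \<tau>: "\<tau> \<in> admissible_perms m t y" "only_forced_inversions m t y \<tau>"
    and y: "inj_on y {..<m}"
    and i: "i < i'" "i' < m" "\<sigma> i = \<tau> i'"
    and least: "\<And>j. j < m \<Longrightarrow> \<tau> j \<noteq> \<sigma> j \<Longrightarrow> y (\<sigma> i) \<le> y (\<tau> j)"
  shows False
proof -
  have perm: "\<sigma> permutes {..<m}" "\<tau> permutes {..<m}"
    using \<sigma> \<tau> unfolding admissible_perms_def by auto
  have "\<tau> i \<noteq> \<tau> i'"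
    using i permutes_inj[OF perm(2)] by (metis inj_eq less_irrefl)
  moreover have "\<tau> i \<in> {..<m}" "\<tau> i' \<in> {..<m}"
    using i permutes_in_image[OF perm(2), of i] permutes_in_image[OF perm(2), of i'] by auto
  ultimately have "y (\<tau> i) \<noteq> y (\<tau> i')"
    using y by (simp add: inj_on_eq_iff)
  moreover have "y (\<tau> i') \<le> y (\<tau> i)"
    using least[of i] i \<open>\<tau> i \<noteq> \<tau> i'\<close> by auto
  ultimately have "y (\<tau> i') < t i"
    using \<tau>(2) i unfolding only_forced_inversions_def by auto
  moreover have "t i \<le> y (\<sigma> i)"
    using \<sigma> i(1,2) unfolding admissible_perms_def by simp
  ultimately show False using i by simp
qed

lemma only_forced_inversions_unique:
  assumes "\<sigma> \<in> admissible_perms m t y" "only_forced_inversions m t y \<sigma>"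
    and "\<tau> \<in> admissible_perms m t y" "only_forced_inversions m t y \<tau>"
    and y: "inj_on y {..<m}"
  shows "\<sigma> = \<tau>"
proof (rule ccontr)
  assume "\<sigma> \<noteq> \<tau>"
  have perm: "\<sigma> permutes {..<m}" "\<tau> permutes {..<m}"
    using assms unfolding admissible_perms_def by auto
  define D where "D = {j. \<sigma> j \<noteq> \<tau> j}"
  have "D \<subseteq> {..<m}"
    unfolding D_def using perm by (rule permutes_disagreement_subset)
  then have "finite D" by (rule finite_subset) simp
  moreover have "D \<noteq> {}"
    unfolding D_def using \<open>\<sigma> \<noteq> \<tau>\<close> by auto
  ultimately obtain i where "i \<in> D" and least: "\<And>j. j \<in> D \<Longrightarrow> y (\<sigma> i) \<le> y (\<sigma> j)"
    using ex_is_arg_min_if_finite[of D "y \<circ> \<sigma>"] unfolding is_arg_min_linorder by auto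
  have "\<sigma> ` D = \<tau> ` D"
    unfolding D_def using perm by (rule permutes_image_disagreement)
  then obtain i' where "i' \<in> D" "\<sigma> i = \<tau> i'"
    using \<open>i \<in> D\<close> by blast
  have "i \<noteq> i'"
    using \<open>i \<in> D\<close> \<open>\<sigma> i = \<tau> i'\<close> unfolding D_def by auto
  have "i < m" "i' < m"
    using \<open>i \<in> D\<close> \<open>i' \<in> D\<close> \<open>D \<subseteq> {..<m}\<close> by auto
  have least_\<sigma>: "y (\<tau> i') \<le> y (\<sigma> j)" if "\<sigma> j \<noteq> \<tau> j" for j
    using least[of j] that \<open>\<sigma> i = \<tau> i'\<close> unfolding D_def by simp
  have least_\<tau>: "y (\<sigma> i) \<le> y (\<tau> j)" if "\<tau> j \<noteq> \<sigma> j" for j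
  proof -
    have "\<tau> j \<in> \<sigma> ` D"
      using that \<open>\<sigma> ` D = \<tau> ` D\<close> unfolding D_def by auto
    then show ?thesis using least by auto
  qed
  show False
  proof (cases "i < i'")
    case True
    show False
      by (rule only_forced_inversions_disagreement[OF assms(1,3,4) y True \<open>i' < m\<close> \<open>\<sigma> i = \<tau> i'\<close>])
        (rule least_\<tau>)
  next
    case False
    then have "i' < i" using \<open>i \<noteq> i'\<close> by simp
    show False
      by (rule only_forced_inversions_disagreement[OF assms(3,1,2) y \<open>i' < i\<close> \<open>i < m\<close>
            \<open>\<sigma> i = \<tau> i'\<close>[symmetric]])
        (rule least_\<sigma>)
  qed
qed

lemma sum_lessThan_swap:
  fixes f g :: "nat \<Rightarrow> 'c::comm_monoid_add"
  assumes "i < m" "i' < m" "i \<noteq> i'" "\<And>k. k \<noteq> i \<Longrightarrow> k \<noteq> i' \<Longrightarrow> f k = g k"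
  shows "(\<Sum>k<m. f k) + (g i + g i') = (\<Sum>k<m. g k) + (f i + f i')"
proof -
  have split: "(\<Sum>k<m. h k) = (\<Sum>k\<in>{..<m} - {i, i'}. h k) + (h i + h i')" for h :: "nat \<Rightarrow> 'c"
    using sum.subset_diff[of "{i, i'}" "{..<m}" h] assms(1-3) by simp
  have "(\<Sum>k\<in>{..<m} - {i, i'}. f k) = (\<Sum>k\<in>{..<m} - {i, i'}. g k)"
    using assms(4) by (intro sum.cong) auto
  then show ?thesis
    unfolding split[of f] split[of g] by (simp add: ac_simps)
qed

lemma admissible_perms_transpose:
  assumes \<sigma>: "\<sigma> \<in> admissible_perms m t y"
    and i: "i < m" "i' < m" "t i \<le> y (\<sigma> i')" "t i' \<le> y (\<sigma> i)"
  shows "\<sigma> \<circ> Transposition.transpose i i' \<in> admissible_perms m t y"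
proof -
  have perm: "\<sigma> permutes {..<m}" and adm: "\<And>k. k < m \<Longrightarrow> t k \<le> y (\<sigma> k)"
    using \<sigma> unfolding admissible_perms_def by auto
  have "\<sigma> \<circ> Transposition.transpose i i' permutes {..<m}"
    using i by (intro permutes_compose[OF _ perm] permutes_swap_id) auto
  moreover have "t k \<le> y ((\<sigma> \<circ> Transposition.transpose i i') k)" if "k < m" for k
    using i adm[OF that] by (auto simp: transpose_def)
  ultimately show ?thesis
    unfolding admissible_perms_def by auto
qed

lemma max_weight_perm_only_forced_inversions:
  fixes w :: "nat \<Rightarrow> nat \<Rightarrow> nat"
  assumes exchange: "\<And>i i' j j'. i < i' \<Longrightarrow> i' < m \<Longrightarrow> j < m \<Longrightarrow> j' < m \<Longrightarrow> y j' < y j \<Longrightarrow>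
        t i \<le> y j' \<Longrightarrow> t i' \<le> y j' \<Longrightarrow> w i j + w i' j' < w i j' + w i' j"
    and \<sigma>: "\<sigma> \<in> admissible_perms m t y"
    and max: "\<And>\<tau>. \<tau> \<in> admissible_perms m t y \<Longrightarrow> (\<Sum>i<m. w i (\<tau> i)) \<le> (\<Sum>i<m. w i (\<sigma> i))"
  shows "only_forced_inversions m t y \<sigma>"
  unfolding only_forced_inversions_def
proof (intro allI impI, rule ccontr)
  fix i i' assume i: "i < i'" "i' < m" "y (\<sigma> i') < y (\<sigma> i)" and "\<not> y (\<sigma> i') < t i"
  then have ti: "t i \<le> y (\<sigma> i')" by simp
  have perm: "\<sigma> permutes {..<m}" and adm: "\<And>k. k < m \<Longrightarrow> t k \<le> y (\<sigma> k)"
    using \<sigma> unfolding admissible_perms_def by auto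
  define \<tau> where "\<tau> = \<sigma> \<circ> Transposition.transpose i i'"
  have \<tau>_simps: "\<tau> i = \<sigma> i'" "\<tau> i' = \<sigma> i" "\<And>k. k \<noteq> i \<Longrightarrow> k \<noteq> i' \<Longrightarrow> \<tau> k = \<sigma> k"
    unfolding \<tau>_def by auto
  have "\<tau> \<in> admissible_perms m t y"
    unfolding \<tau>_def using ti adm[OF i(2)] i by (intro admissible_perms_transpose[OF \<sigma>]) auto
  have "\<sigma> i < m" "\<sigma> i' < m"
    using i permutes_in_image[OF perm, of i] permutes_in_image[OF perm, of i'] by auto
  then have "w i (\<sigma> i) + w i' (\<sigma> i') < w i (\<tau> i) + w i' (\<tau> i')"
    unfolding \<tau>_simps(1,2) using exchange[OF i(1,2) _ _ i(3) ti adm[OF i(2)]] by simp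
  moreover have "(\<Sum>k<m. w k (\<sigma> k)) + (w i (\<tau> i) + w i' (\<tau> i')) =
      (\<Sum>k<m. w k (\<tau> k)) + (w i (\<sigma> i) + w i' (\<sigma> i'))"
    using i \<tau>_simps(3) by (intro sum_lessThan_swap) auto
  ultimately have "(\<Sum>k<m. w k (\<sigma> k)) < (\<Sum>k<m. w k (\<tau> k))"
    by linarith
  then show False
    using max[OF \<open>\<tau> \<in> admissible_perms m t y\<close>] by simp
qed

lemma admissible_perms_unique_max_weight:
  fixes w :: "nat \<Rightarrow> nat \<Rightarrow> nat"
  assumes exchange: "\<And>i i' j j'. i < i' \<Longrightarrow> i' < m \<Longrightarrow> j < m \<Longrightarrow> j' < m \<Longrightarrow> y j' < y j \<Longrightarrow>
        t i \<le> y j' \<Longrightarrow> t i' \<le> y j' \<Longrightarrow> w i j + w i' j' < w i j' + w i' j"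
    and y: "inj_on y {..<m}"
    and "admissible_perms m t y \<noteq> {}"
  shows "\<exists>\<sigma>\<in>admissible_perms m t y. \<forall>\<tau>\<in>admissible_perms m t y - {\<sigma>}.
           (\<Sum>i<m. w i (\<tau> i)) < (\<Sum>i<m. w i (\<sigma> i))"
proof -
  let ?A = "admissible_perms m t y" and ?W = "\<lambda>\<sigma>. \<Sum>i<m. w i (\<sigma> i)"
  have fin: "finite (?W ` ?A)"
    using finite_admissible_perms by (rule finite_imageI)
  have "Max (?W ` ?A) \<in> ?W ` ?A"
    using fin assms(3) by (intro Max_in) simp_all
  then obtain \<sigma> where \<sigma>: "\<sigma> \<in> ?A" and \<sigma>_max: "?W \<sigma> = Max (?W ` ?A)"
    by (rule imageE) simp
  have max: "?W \<tau> \<le> ?W \<sigma>" if "\<tau> \<in> ?A" for \<tau>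
    unfolding \<sigma>_max using fin that by (intro Max_ge) simp_all
  have "?W \<tau> < ?W \<sigma>" if \<tau>: "\<tau> \<in> ?A" "\<tau> \<noteq> \<sigma>" for \<tau>
  proof (rule ccontr)
    assume "\<not> ?W \<tau> < ?W \<sigma>"
    then have "?W \<rho> \<le> ?W \<tau>" if "\<rho> \<in> ?A" for \<rho>
      using max[OF that] max[OF \<tau>(1)] by linarith
    then have "only_forced_inversions m t y \<tau>"
      by (intro max_weight_perm_only_forced_inversions[OF exchange \<tau>(1)])
    moreover have "only_forced_inversions m t y \<sigma>"
      by (intro max_weight_perm_only_forced_inversions[OF exchange \<sigma> max])
    ultimately have "\<sigma> = \<tau>"
      by (intro only_forced_inversions_unique[OF \<sigma> _ \<tau>(1) _ y])
    then show False using \<tau>(2) by simp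
  qed
  then show ?thesis using \<sigma> by blast
qed

section \<open>Determinants of threshold matrices\<close>

lemma prod_threshold_mat:
  fixes \<alpha> :: "'a::comm_ring_1"
  assumes "p permutes {..<m}"
  shows "(\<Prod>i<m. mat m m (\<lambda>(i, j). if t i \<le> y j then \<alpha> ^ w i j else 0) $$ (i, p i)) =
    (if p \<in> admissible_perms m t y then \<alpha> ^ (\<Sum>i<m. w i (p i)) else 0)"
proof -
  have p: "p i < m" if "i < m" for i
    using permutes_in_image[OF assms, of i] that by simp
  show ?thesis
  proof (cases "p \<in> admissible_perms m t y")
    case True
    then have "(\<Prod>i<m. mat m m (\<lambda>(i, j). if t i \<le> y j then \<alpha> ^ w i j else 0) $$ (i, p i)) =
        (\<Prod>i<m. \<alpha> ^ w i (p i))"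
      using p unfolding admissible_perms_def by (intro prod.cong) auto
    then show ?thesis using True by (simp add: power_sum)
  next
    case False
    then obtain i where "i < m" "\<not> t i \<le> y (p i)"
      using assms unfolding admissible_perms_def by auto
    then have "(\<Prod>i<m. mat m m (\<lambda>(i, j). if t i \<le> y j then \<alpha> ^ w i j else 0) $$ (i, p i)) = 0"
      using p by (intro prod_zero bexI[of _ i]) auto
    then show ?thesis using False by simp
  qed
qed

lemma det_threshold_mat:
  fixes \<alpha> :: "'a::comm_ring_1"
  shows "det (mat m m (\<lambda>(i, j). if t i \<le> y j then \<alpha> ^ w i j else 0)) =
    (\<Sum>\<sigma>\<in>admissible_perms m t y. signof \<sigma> * \<alpha> ^ (\<Sum>i<m. w i (\<sigma> i)))"
proof -
  let ?S = "mat m m (\<lambda>(i, j). if t i \<le> y j then \<alpha> ^ w i j else 0)"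
  have "det ?S = (\<Sum>p\<in>{p. p permutes {..<m}}. signof p * (\<Prod>i<m. ?S $$ (i, p i)))"
    unfolding det_def by (simp add: atLeast0LessThan)
  also have "\<dots> = (\<Sum>p\<in>{p. p permutes {..<m}}.
      if p \<in> admissible_perms m t y then signof p * \<alpha> ^ (\<Sum>i<m. w i (p i)) else 0)"
    by (intro sum.cong) (simp_all add: prod_threshold_mat)
  also have "\<dots> = (\<Sum>\<sigma>\<in>admissible_perms m t y. signof \<sigma> * \<alpha> ^ (\<Sum>i<m. w i (\<sigma> i)))"
    by (subst sum.inter_filter[symmetric]) (auto simp: admissible_perms_def finite_permutations intro: sum.cong)
  finally show ?thesis .
qed

lemma card_le_if_det_threshold_mat_eq_0:
  fixes \<alpha> :: "'a::{finite,field}" and w :: "nat \<Rightarrow> nat \<Rightarrow> nat"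
  assumes "primitive_element \<alpha>"
    and exchange: "\<And>i i' j j'. i < i' \<Longrightarrow> i' < m \<Longrightarrow> j < m \<Longrightarrow> j' < m \<Longrightarrow> y j' < y j \<Longrightarrow>
        t i \<le> y j' \<Longrightarrow> t i' \<le> y j' \<Longrightarrow> w i j + w i' j' < w i j' + w i' j"
    and "inj_on y {..<m}" "admissible_perms m t y \<noteq> {}"
    and "det (mat m m (\<lambda>(i, j). if t i \<le> y j then \<alpha> ^ w i j else 0)) = 0"
  shows "\<exists>\<sigma>\<in>admissible_perms m t y. card (UNIV :: 'a set) \<le> CHAR('a) ^ (\<Sum>i<m. w i (\<sigma> i))"
proof -
  let ?W = "\<lambda>\<sigma>. \<Sum>i<m. w i (\<sigma> i)"
  obtain \<sigma> where \<sigma>: "\<sigma> \<in> admissible_perms m t y"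
    and max: "\<And>\<tau>. \<tau> \<in> admissible_perms m t y - {\<sigma>} \<Longrightarrow> ?W \<tau> < ?W \<sigma>"
    using admissible_perms_unique_max_weight[where t = t and y = y and w = w, OF exchange assms(3,4)]
    by blast
  have "\<bar>sign \<sigma>\<bar> = 1"
    by (simp add: sign_def)
  moreover have "(\<Sum>\<tau>\<in>admissible_perms m t y. of_int (sign \<tau>) * \<alpha> ^ ?W \<tau>) = 0"
    using assms(5) by (simp add: det_threshold_mat)
  ultimately have "\<alpha> ^ ?W \<sigma> \<in> int_span_powers \<alpha> (?W \<sigma>)"
    by (intro power_in_int_span_powers_if_sum_eq_0[where c = sign and E = ?W, OF finite_admissible_perms \<sigma>])
      (use max in auto)
  then have "card (UNIV :: 'a set) \<le> CHAR('a) ^ ?W \<sigma>"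
    by (rule card_le_of_power_in_int_span_powers[OF assms(1)])
  then show ?thesis using \<sigma> by blast
qed

lemma two_power_exchange:
  fixes a d h :: nat
  assumes "0 < d" "0 < h"
  shows "2 ^ (a + h) + 2 ^ (a + d) < 2 ^ a + (2::nat) ^ (a + d + h)"
proof -
  have "(1::int) < 2 ^ d" "(1::int) < 2 ^ h"
    using assms by (auto intro: one_less_power)
  then have "0 < ((2::int) ^ d - 1) * (2 ^ h - 1)"
    by simp
  then have "(2::int) ^ h + 2 ^ d < 1 + 2 ^ d * 2 ^ h"
    by (simp add: algebra_simps)
  then have "(2::int) ^ a * (2 ^ h + 2 ^ d) < 2 ^ a * (1 + 2 ^ d * 2 ^ h)"
    by (intro mult_strict_left_mono) simp_all
  then have "int (2 ^ (a + h) + 2 ^ (a + d)) < int (2 ^ a + 2 ^ (a + d + h))"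
    by (simp add: power_add algebra_simps)
  then show ?thesis
    by (simp only: of_nat_less_iff)
qed

lemma two_power_nat_exchange:
  fixes u u' :: nat and v v' :: int
  assumes "u < u'" "v' < v" "0 \<le> int u + v'"
  shows "2 ^ nat (int u + v) + 2 ^ nat (int u' + v') < 2 ^ nat (int u + v') + (2::nat) ^ nat (int u' + v)"
proof -
  define a d h where "a = nat (int u + v')" and "d = u' - u" and "h = nat (v - v')"
  have pos: "0 < d" "0 < h"
    using assms unfolding d_def h_def by simp_all
  have exps: "nat (int u + v) = a + h" "nat (int u' + v') = a + d" "nat (int u' + v) = a + d + h"
    using assms unfolding a_def d_def h_def by auto
  show ?thesis
    unfolding exps a_def[symmetric] using pos by (rule two_power_exchange)
qed

lemma sum_two_power_less:
  assumes "inj_on r A" "r ` A \<subseteq> {..<N}"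
  shows "(\<Sum>i\<in>A. (2::nat) ^ r i) < 2 ^ N"
proof -
  have "(\<Sum>i\<in>A. (2::nat) ^ r i) = (\<Sum>k\<in>r ` A. 2 ^ k)"
    using assms(1) by (simp add: sum.reindex)
  also have "\<dots> \<le> (\<Sum>k<N. 2 ^ k)"
    using assms(2) by (intro sum_mono2) auto
  also have "\<dots> < 2 ^ N"
    by (induction N) auto
  finally show ?thesis .
qed

lemma sum_two_power_shift_less:
  assumes "inj_on r {..<m}" "\<And>i. i < m \<Longrightarrow> r i < N" "\<And>i. i < m \<Longrightarrow> s i \<le> r i + Y"
  shows "(\<Sum>i<m. (2::nat) ^ s i) < 2 ^ (N + Y)"
proof -
  have "(\<Sum>i<m. (2::nat) ^ s i) \<le> (\<Sum>i<m. 2 ^ Y * 2 ^ r i)"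
  proof (rule sum_mono)
    fix i assume "i \<in> {..<m}"
    then have "s i \<le> Y + r i"
      using assms(3) by fastforce
    then show "(2::nat) ^ s i \<le> 2 ^ Y * 2 ^ r i"
      by (simp add: power_increasing flip: power_add)
  qed
  also have "\<dots> < 2 ^ Y * 2 ^ N"
    using assms(1,2) by (simp flip: sum_distrib_left add: sum_two_power_less image_subset_iff)
  also have "\<dots> = 2 ^ (N + Y)"
    by (simp add: power_add)
  finally show ?thesis .
qed

lemma det_two_power_threshold_mat_neq_0:
  fixes \<alpha> :: "'a::{finite,field}" and r :: "nat \<Rightarrow> nat" and t y :: "nat \<Rightarrow> int"
  assumes prim: "primitive_element \<alpha>"
    and r: "strict_mono_on {..<m} r" "\<And>i. i < m \<Longrightarrow> r i < N"
    and y: "inj_on y {..<m}" "\<And>j. j < m \<Longrightarrow> y j \<le> int Y"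
    and nonneg: "\<And>i j. i < m \<Longrightarrow> j < m \<Longrightarrow> t i \<le> y j \<Longrightarrow> 0 \<le> int (r i) + y j"
    and nontrivial: "admissible_perms m t y \<noteq> {}"
    and card: "CHAR('a) ^ 2 ^ (N + Y) \<le> card (UNIV :: 'a set)"
  shows "det (mat m m (\<lambda>(i, j). if t i \<le> y j then \<alpha> ^ 2 ^ nat (int (r i) + y j) else 0)) \<noteq> 0"
proof
  define w where "w i j = (2::nat) ^ nat (int (r i) + y j)" for i j
  assume "det (mat m m (\<lambda>(i, j). if t i \<le> y j then \<alpha> ^ 2 ^ nat (int (r i) + y j) else 0)) = 0"
  then have "det (mat m m (\<lambda>(i, j). if t i \<le> y j then \<alpha> ^ w i j else 0)) = 0"
    unfolding w_def .
  moreover have "w i j + w i' j' < w i j' + w i' j"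
    if "i < i'" "i' < m" "j < m" "j' < m" "y j' < y j" "t i \<le> y j'" "t i' \<le> y j'" for i i' j j'
    unfolding w_def using that
    by (intro two_power_nat_exchange strict_mono_onD[OF r(1)] nonneg) auto
  ultimately obtain \<sigma> where \<sigma>: "\<sigma> \<in> admissible_perms m t y"
    and card_le: "card (UNIV :: 'a set) \<le> CHAR('a) ^ (\<Sum>i<m. w i (\<sigma> i))"
    using card_le_if_det_threshold_mat_eq_0[OF prim _ y(1) nontrivial] by blast
  have shift: "nat (int (r i) + y (\<sigma> i)) \<le> r i + Y" if "i < m" for i
    using y(2)[of "\<sigma> i"] permutes_in_image[of \<sigma> "{..<m}" i] \<sigma> that
    unfolding admissible_perms_def by auto
  have "(\<Sum>i<m. w i (\<sigma> i)) < 2 ^ (N + Y)"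
    unfolding w_def by (rule sum_two_power_shift_less[OF strict_mono_on_imp_inj_on[OF r(1)] r(2) shift])
  moreover have "1 < CHAR('a)"
    by (intro prime_gt_1_nat prime_CHAR_semidom finite_imp_CHAR_pos) simp
  ultimately have "CHAR('a) ^ (\<Sum>i<m. w i (\<sigma> i)) < CHAR('a) ^ 2 ^ (N + Y)"
    by (simp add: power_strict_increasing_iff)
  then show False
    using card_le card by simp
qed

section \<open>The block Toeplitz matrix\<close>

lemma admissible_perms_nonempty_if_not_trivial_minor:
  assumes "\<not> trivial_minor (mat m m (\<lambda>(i, j). if t i \<le> y j then f i j else 0))"
  shows "admissible_perms m t y \<noteq> {}"
proof -
  obtain \<sigma> where \<sigma>: "\<sigma> permutes {..<m}"
    and nz: "\<And>i. i < m \<Longrightarrow> mat m m (\<lambda>(i, j). if t i \<le> y j then f i j else 0) $$ (i, \<sigma> i) \<noteq> 0"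
    using assms unfolding trivial_minor_def by (auto simp: atLeast0LessThan)
  have "t i \<le> y (\<sigma> i)" if "i < m" for i
    using nz[OF that] permutes_in_image[OF \<sigma>, of i] that by (auto split: if_splits)
  then show ?thesis
    using \<sigma> unfolding admissible_perms_def by blast
qed

lemma submatrix_eq_mat_pick:
  assumes "I \<subseteq> {..<dim_row A}" "J \<subseteq> {..<dim_col A}"
  shows "submatrix A I J = mat (card I) (card J) (\<lambda>(i, j). A $$ (pick I i, pick J j))"
proof -
  have "{i. i < dim_row A \<and> i \<in> I} = I" "{j. j < dim_col A \<and> j \<in> J} = J"
    using assms by auto
  then show ?thesis
    unfolding submatrix_def by simp
qed

text \<open>In block \<open>T\<^sub>\<ell>\<close> with
  \<open>\<ell> = r div M - c div M\<close> the exponent of the entry in row \<open>r\<close> and column \<open>c\<close> is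
  \<open>2 ^ (M \<ell> + r mod M + c mod M) = 2 ^ (r + col_offset M c)\<close>, and the block lies above the
  diagonal exactly when \<open>col_offset M c < row_threshold M r\<close>.\<close>

definition col_offset :: "nat \<Rightarrow> nat \<Rightarrow> int" where
  "col_offset M c = int (c mod M) - int M * int (c div M)"

definition row_threshold :: "nat \<Rightarrow> nat \<Rightarrow> int" where
  "row_threshold M r = - (int M * int (r div M))"

lemma row_threshold_le_col_offset_iff:
  assumes "0 < M"
  shows "row_threshold M r \<le> col_offset M c \<longleftrightarrow> c div M \<le> r div M"
proof
  assume "row_threshold M r \<le> col_offset M c"
  moreover have "int (c mod M) < int M"
    using assms by simp
  ultimately have "int M * int (c div M) < int M * (int (r div M) + 1)"
    unfolding row_threshold_def col_offset_def by (simp add: algebra_simps)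
  then have "int (c div M) < int (r div M) + 1"
    using assms by (simp add: mult_less_cancel_left_pos)
  then show "c div M \<le> r div M"
    by simp
next
  assume "c div M \<le> r div M"
  then have "int M * int (c div M) \<le> int M * int (r div M)"
    by (simp add: mult_left_mono)
  then show "row_threshold M r \<le> col_offset M c"
    unfolding row_threshold_def col_offset_def by simp
qed

lemma col_offset_le:
  assumes "0 < M"
  shows "col_offset M c \<le> int (M - 1)"
proof -
  have "int (c mod M) \<le> int M - 1"
    using mod_less_divisor[OF assms, of c] by linarith
  moreover have "0 \<le> int M * int (c div M)" "int (M - 1) = int M - 1"
    using assms by simp_all
  ultimately show ?thesis
    unfolding col_offset_def by linarith
qed

lemma inj_col_offset:
  assumes "0 < M"
  shows "inj (col_offset M)"
proof
  fix c c' assume eq: "col_offset M c = col_offset M c'"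
  have mod: "col_offset M x mod int M = int (x mod M)" for x
  proof -
    have "col_offset M x mod int M = int (x mod M) mod int M"
      unfolding col_offset_def by (simp add: mod_diff_eq[symmetric])
    also have "\<dots> = int (x mod M)"
      using assms by (simp add: of_nat_mod[symmetric])
    finally show ?thesis .
  qed
  have "c mod M = c' mod M"
    using mod[of c] mod[of c'] eq by simp
  moreover from this have "c div M = c' div M"
    using eq assms unfolding col_offset_def by simp
  ultimately show "c = c'"
    by (metis div_mult_mod_eq)
qed

lemma row_threshold_le_col_offset_imp_nonneg:
  assumes "row_threshold M r \<le> col_offset M c"
  shows "0 \<le> int r + col_offset M c"
proof -
  have "int M * int (r div M) \<le> int r"
    by (metis div_mult_mod_eq le_add1 mult.commute of_nat_le_iff of_nat_mult)
  then show ?thesis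
    using assms unfolding row_threshold_def by linarith
qed

lemma block_toeplitz_T_block_index:
  assumes "0 < M" "r < (L + 1) * M" "c < (L + 1) * M"
  shows "block_toeplitz (T_block \<alpha> M) M L $$ (r, c) =
    (if row_threshold M r \<le> col_offset M c then \<alpha> ^ 2 ^ nat (int r + col_offset M c) else 0)"
proof -
  have exp: "nat (int r + col_offset M c) = M * (r div M - c div M) + r mod M + c mod M"
    if "c div M \<le> r div M"
  proof -
    have "int r = int M * int (r div M) + int (r mod M)"
      by (metis div_mult_mod_eq of_nat_add of_nat_mult mult.commute)
    moreover have "int (M * (r div M - c div M)) = int M * int (r div M) - int M * int (c div M)"
      using that by (simp add: of_nat_diff right_diff_distrib)
    ultimately have "int r + col_offset M c = int (M * (r div M - c div M) + r mod M + c mod M)"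
      unfolding col_offset_def by simp
    then show ?thesis by (simp only: nat_int)
  qed
  show ?thesis
    using assms exp by (simp add: block_toeplitz_def T_block_def row_threshold_le_col_offset_iff)
qed

lemma submatrix_block_toeplitz_T_block:
  assumes M: "0 < M" and IJ: "I \<subseteq> {..<(L + 1) * M}" "J \<subseteq> {..<(L + 1) * M}" "card I = card J"
  shows "submatrix (block_toeplitz (T_block \<alpha> M) M L) I J =
    mat (card I) (card I) (\<lambda>(i, j). if row_threshold M (pick I i) \<le> col_offset M (pick J j)
      then \<alpha> ^ 2 ^ nat (int (pick I i) + col_offset M (pick J j)) else 0)"
proof -
  let ?B = "block_toeplitz (T_block \<alpha> M) M L" and ?n = "(L + 1) * M"
  have dims: "dim_row ?B = ?n" "dim_col ?B = ?n"
    by (simp_all add: block_toeplitz_def)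
  have pick_I: "pick I i < ?n" if "i < card I" for i
    using pick_in_set[of i I] IJ that by auto
  have pick_J: "pick J j < ?n" if "j < card I" for j
    using pick_in_set[of j J] IJ that by auto
  have "submatrix ?B I J = mat (card I) (card I) (\<lambda>(i, j). ?B $$ (pick I i, pick J j))"
    using submatrix_eq_mat_pick[of I ?B J] IJ dims by simp
  also have "\<dots> = mat (card I) (card I) (\<lambda>(i, j). if row_threshold M (pick I i) \<le> col_offset M (pick J j)
      then \<alpha> ^ 2 ^ nat (int (pick I i) + col_offset M (pick J j)) else 0)"
    by (rule cong_mat) (simp_all add: block_toeplitz_T_block_index[OF M pick_I pick_J])
  finally show ?thesis .
qed

lemma superregular_block_toeplitz_T_block:
  fixes \<alpha> :: "'a::{finite,field}"
  assumes M: "0 < M" and prim: "primitive_element \<alpha>"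
    and card: "CHAR('a) ^ 2 ^ ((L + 2) * M - 1) \<le> card (UNIV :: 'a set)"
  shows "superregular (block_toeplitz (T_block \<alpha> M) M L)"
  unfolding superregular_def
proof (intro allI impI)
  fix I J
  let ?B = "block_toeplitz (T_block \<alpha> M) M L" and ?n = "(L + 1) * M"
  assume I: "I \<subseteq> {0..<dim_row ?B}" and J: "J \<subseteq> {0..<dim_col ?B}" and "card I = card J"
    and nontrivial: "\<not> trivial_minor (submatrix ?B I J)"
  define m where "m = card I"
  define t where "t i = row_threshold M (pick I i)" for i
  define y where "y j = col_offset M (pick J j)" for j
  have dims: "dim_row ?B = ?n" "dim_col ?B = ?n"
    by (simp_all add: block_toeplitz_def)
  have S: "submatrix ?B I J =
      mat m m (\<lambda>(i, j). if t i \<le> y j then \<alpha> ^ 2 ^ nat (int (pick I i) + y j) else 0)"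
    unfolding t_def y_def m_def using I J dims \<open>card I = card J\<close>
    by (intro submatrix_block_toeplitz_T_block[OF M]) (simp_all add: atLeast0LessThan)
  have mono_I: "strict_mono_on {..<m} (pick I)"
    by (rule strict_mono_onI) (auto simp: m_def intro: pick_mono)
  have mono_J: "strict_mono_on {..<m} (pick J)"
    by (rule strict_mono_onI) (auto simp: m_def \<open>card I = card J\<close> intro: pick_mono)
  show "det (submatrix ?B I J) \<noteq> 0"
    unfolding S
  proof (rule det_two_power_threshold_mat_neq_0[OF prim mono_I, where N = ?n and Y = "M - 1"])
    show "pick I i < ?n" if "i < m" for i
      using pick_in_set[of i I] I dims that unfolding m_def by auto
    show "inj_on y {..<m}"
    proof (rule inj_onI)
      fix j j' assume j: "j \<in> {..<m}" "j' \<in> {..<m}" and "y j = y j'"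
      then have "pick J j = pick J j'"
        using inj_col_offset[OF M] unfolding y_def by (simp add: inj_eq)
      then show "j = j'"
        using strict_mono_on_imp_inj_on[OF mono_J] j by (simp add: inj_on_eq_iff)
    qed
    show "y j \<le> int (M - 1)" if "j < m" for j
      unfolding y_def by (rule col_offset_le[OF M])
    show "0 \<le> int (pick I i) + y j" if "i < m" "j < m" "t i \<le> y j" for i j
      using that(3) unfolding t_def y_def by (rule row_threshold_le_col_offset_imp_nonneg)
    show "admissible_perms m t y \<noteq> {}"
      using nontrivial unfolding S by (rule admissible_perms_nonempty_if_not_trivial_minor)
    show "CHAR('a) ^ 2 ^ (?n + (M - 1)) \<le> card (UNIV :: 'a set)"
      using card M by (simp add: algebra_simps)
  qed
qed

theorem theorem3p2:
  fixes n k \<delta> :: nat and \<alpha> :: "'a::{finite,field}"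
  assumes "0 < n" "0 < k" "0 < \<delta>" "k < n" "(n - k) dvd \<delta>"
    and "primitive_element \<alpha>"
    and "card (UNIV :: 'a set) \<ge>
           CHAR('a) ^ (2 ^ (max (n - k) k * (\<delta> div k + \<delta> div (n - k) + 2) - 1))"
  shows "superregular (block_toeplitz (T_block \<alpha> (max (n - k) k)) (max (n - k) k)
                         (\<delta> div k + \<delta> div (n - k)))"
proof -
  have "0 < max (n - k) k"
    using assms(2) by (simp add: less_max_iff_disj)
  then show ?thesis
    using assms(6,7) by (intro superregular_block_toeplitz_T_block) (simp_all add: mult.commute)
qed

end
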